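(* Let $m\le n$ be positive integers and $\eta\in[0,1]$, $\zeta,\Delta,\alpha$ reals with $\Delta>0$ and $\alpha\ge 2\Delta+\zeta$. Let $\mathbf{A}'$ be an $(\eta,n(1-\zeta))$-block source over $\mathbb{F}_2^{m\times n}$ and $\mathbf{x}$ a random variable over $\mathbb{F}_2^n$ independent of $\mathbf{A}'$ with $H_\infty(\mathbf{x})\ge\alpha n$. Then there exists $T\subseteq[m]$ with $|T|\ge(1-\eta)m$ such that $(\mathbf{A}'\mathbf{x})_T$ (the coordinates of $\mathbf{A}'\mathbf{x}\in\mathbb{F}_2^m$ indexed by $T$) is within statistical distance $|T|\cdot 2^{-\Delta n}$ of the uniform distribution on $\mathbb{F}_2^{|T|}$.
   Context: $H_\infty(X)=-\log_2\max_x\Pr[X=x]$. For a matrix $A$, $A_i$ is its $i$-th row and $A_{[i]}$ its first $i$ rows. A random variable $\mathbf{A}'$ over $\mathbb{F}_2^{m\times n}$ is an $(\eta,n')$-block source if there exists $S\subseteq[m]$ with $|S|\le\eta m$ such that for every $A\in\mathrm{supp}(\mathbf{A}')$ and every $i\notin S$, $H_\infty(\mathbf{A}'_i\mid\mathbf{A}'_{[i-1]}=A_{[i-1]})\ge n'$. *)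

theory Defs
  imports "HOL-Probability.Probability_Mass_Function"
begin

text \<open>Elements of F_2 are booleans (True = 1). A vector in F_2^n is a bool list of
length n; an m x n matrix is a list of m rows, each a bool list of length n.
Rows are indexed 0..m-1 (paper: 1..m).\<close>

definition dot2 :: "bool list \<Rightarrow> bool list \<Rightarrow> bool" where
  "dot2 r x = odd (length (filter id (map2 (\<and>) r x)))"

definition mat_vec2 :: "bool list list \<Rightarrow> bool list \<Rightarrow> bool list" where
  "mat_vec2 A x = map (\<lambda>r. dot2 r x) A"

definition is_matrix :: "nat \<Rightarrow> nat \<Rightarrow> bool list list \<Rightarrow> bool" where
  "is_matrix m n A \<longleftrightarrow> length A = m \<and> (\<forall>r\<in>set A. length r = n)"

definition min_entropy :: "'a pmf \<Rightarrow> real" where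
  "min_entropy X = - log 2 (Sup (pmf X ` UNIV))"

definition block_source :: "real \<Rightarrow> real \<Rightarrow> nat \<Rightarrow> bool list list pmf \<Rightarrow> bool" where
  "block_source \<eta> n' m A \<longleftrightarrow>
     (\<exists>S \<subseteq> {..<m}. real (card S) \<le> \<eta> * real m \<and>
        (\<forall>A0 \<in> set_pmf A. \<forall>i<m. i \<notin> S \<longrightarrow>
           min_entropy (map_pmf (\<lambda>B. B ! i) (cond_pmf A {B. take i B = take i A0})) \<ge> n'))"

definition stat_dist :: "'a pmf \<Rightarrow> 'a pmf \<Rightarrow> real" where
  "stat_dist p q = (1/2) * (\<Sum>z \<in> set_pmf p \<union> set_pmf q. \<bar>pmf p z - pmf q z\<bar>)"

end

theory Submission
  imports Defs
begin

text \<open>Write \<open>\<chi>_v(r) = (-1)^{\<langle>r,v\<rangle>}\<close>. A hybrid argument over the rows in \<open>T\<close> bounds the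
distance of \<open>(A'x)_T\<close> from uniform by the sum, over \<open>i \<in> T\<close>, of the expected bias of
\<open>\<chi>_x(A'_i)\<close> given the first \<open>i\<close> rows. Given any prefix, row \<open>i\<close> and \<open>x\<close> are independent
sources with min-entropy \<open>n(1-\<zeta>)\<close> and \<open>\<alpha>n\<close>, so the inner product extractor
(Cauchy--Schwarz plus Parseval) bounds that bias by
\<open>sqrt(2^(-\<alpha>n) 2^n 2^(-n(1-\<zeta>))) \<le> 2^(-\<Delta>n)\<close>.\<close>

definition lists_len :: "'a set \<Rightarrow> nat \<Rightarrow> 'a list set" where
  "lists_len R m = {B. set B \<subseteq> R \<and> length B = m}"

lemma finite_lists_len: "finite R \<Longrightarrow> finite (lists_len R m)"
  unfolding lists_len_def by (rule finite_lists_length_eq)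

lemma lists_len_0 [simp]: "lists_len R 0 = {[]}"
  unfolding lists_len_def by auto

lemma lists_len_Suc: "lists_len R (Suc m) = (\<lambda>(r, B). r # B) ` (R \<times> lists_len R m)"
  unfolding lists_len_def by (auto simp: image_iff length_Suc_conv)

lemma sum_lists_len_Suc:
  assumes "finite R"
  shows "(\<Sum>B\<in>lists_len R (Suc m). f B) = (\<Sum>r\<in>R. \<Sum>B\<in>lists_len R m. f (r # B))"
proof -
  have "inj_on (\<lambda>(r, B). r # B) (R \<times> lists_len R m)"
    by (auto simp: inj_on_def)
  then have "(\<Sum>B\<in>lists_len R (Suc m). f B) = (\<Sum>z\<in>R \<times> lists_len R m. f ((\<lambda>(r, B). r # B) z))"
    unfolding lists_len_Suc by (rule sum.reindex[unfolded comp_def])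
  also have "\<dots> = (\<Sum>r\<in>R. \<Sum>B\<in>lists_len R m. f (r # B))"
    by (subst sum.cartesian_product) (simp add: case_prod_beta)
  finally show ?thesis .
qed

lemma lists_len_UNIV: "lists_len UNIV k = {w. length w = k}"
  unfolding lists_len_def by auto

lemma card_lists_len_bool: "card (lists_len (UNIV :: bool set) k) = 2 ^ k"
  using card_lists_length_eq[of "UNIV :: bool set" k] unfolding lists_len_def by simp

section \<open>Characters of \<open>\<bbbF>\<^sub>2\<^sup>n\<close> and the inner product extractor\<close>

definition parity_sign :: "bool \<Rightarrow> real" where
  "parity_sign b = (if b then -1 else 1)"

lemma dot2_Nil: "dot2 [] v = False"
  unfolding dot2_def by simp

lemma dot2_Cons: "dot2 (a # r) (c # v) = ((a \<and> c) \<noteq> dot2 r v)"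
  unfolding dot2_def by auto

lemma sum_parity_sign_dot2_mult:
  assumes "r \<in> lists_len UNIV n" "r' \<in> lists_len UNIV n"
  shows "(\<Sum>v\<in>lists_len UNIV n. parity_sign (dot2 r v) * parity_sign (dot2 r' v))
           = (if r = r' then 2 ^ n else 0)"
  using assms
proof (induction n arbitrary: r r')
  case 0
  then show ?case by (simp add: parity_sign_def dot2_Nil)
next
  case (Suc n)
  obtain a r0 where r: "r = a # r0" "r0 \<in> lists_len UNIV n"
    using Suc.prems(1) unfolding lists_len_Suc by auto
  obtain b r0' where r': "r' = b # r0'" "r0' \<in> lists_len UNIV n"
    using Suc.prems(2) unfolding lists_len_Suc by auto
  let ?s = "\<lambda>c. parity_sign (a \<and> c) * parity_sign (b \<and> c)"
  have "(\<Sum>v\<in>lists_len UNIV (Suc n). parity_sign (dot2 r v) * parity_sign (dot2 r' v))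
      = (\<Sum>c\<in>UNIV. \<Sum>v\<in>lists_len UNIV n.
           ?s c * (parity_sign (dot2 r0 v) * parity_sign (dot2 r0' v)))"
    by (subst sum_lists_len_Suc)
      (auto simp: r(1) r'(1) dot2_Cons parity_sign_def intro!: sum.cong)
  also have "\<dots> = (\<Sum>c\<in>UNIV. ?s c * (if r0 = r0' then 2 ^ n else 0))"
    by (simp add: sum_distrib_left[symmetric] Suc.IH r(2) r'(2))
  also have "\<dots> = (if r = r' then 2 ^ Suc n else 0)"
    by (cases a; cases b) (auto simp: r r' parity_sign_def UNIV_bool)
  finally show ?case .
qed

lemma parseval:
  fixes q :: "bool list \<Rightarrow> real"
  shows "(\<Sum>v\<in>lists_len UNIV n. (\<Sum>r\<in>lists_len UNIV n. q r * parity_sign (dot2 r v))\<^sup>2)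
           = 2 ^ n * (\<Sum>r\<in>lists_len UNIV n. (q r)\<^sup>2)"
proof -
  let ?L = "lists_len (UNIV :: bool set) n"
  let ?\<chi> = "\<lambda>r r' v. parity_sign (dot2 r v) * parity_sign (dot2 r' v)"
  have "(\<Sum>v\<in>?L. (\<Sum>r\<in>?L. q r * parity_sign (dot2 r v))\<^sup>2)
      = (\<Sum>v\<in>?L. \<Sum>r\<in>?L. \<Sum>r'\<in>?L. q r * q r' * ?\<chi> r r' v)"
    unfolding power2_eq_square sum_product by (intro sum.cong refl) (simp add: ac_simps)
  also have "\<dots> = (\<Sum>r\<in>?L. \<Sum>r'\<in>?L. q r * q r' * (\<Sum>v\<in>?L. ?\<chi> r r' v))"
    unfolding sum_distrib_left by (subst sum.swap) (rule sum.cong[OF refl], rule sum.swap)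
  also have "\<dots> = (\<Sum>r\<in>?L. \<Sum>r'\<in>?L. if r = r' then q r * q r * 2 ^ n else 0)"
    by (intro sum.cong refl) (simp add: sum_parity_sign_dot2_mult)
  also have "\<dots> = (\<Sum>r\<in>?L. q r * q r * 2 ^ n)"
    by (simp add: finite_lists_len)
  also have "\<dots> = 2 ^ n * (\<Sum>r\<in>?L. (q r)\<^sup>2)"
    by (simp add: sum_distrib_left power2_eq_square ac_simps)
  finally show ?thesis .
qed

lemma inner_product_extractor:
  fixes q p :: "bool list \<Rightarrow> real"
  assumes q_nonneg: "\<And>r. 0 \<le> q r" and q_sum: "(\<Sum>r\<in>lists_len UNIV n. q r) \<le> 1"
    and q_le: "\<And>r. q r \<le> b1"
    and p_nonneg: "\<And>v. 0 \<le> p v" and p_sum: "(\<Sum>v\<in>lists_len UNIV n. p v) = 1"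
    and p_le: "\<And>v. p v \<le> b2"
  shows "(\<Sum>v\<in>lists_len UNIV n. p v * \<bar>\<Sum>r\<in>lists_len UNIV n. q r * parity_sign (dot2 r v)\<bar>)
           \<le> sqrt (b2 * 2 ^ n * b1)"
proof -
  let ?L = "lists_len (UNIV :: bool set) n"
  define F where "F v = (\<Sum>r\<in>?L. q r * parity_sign (dot2 r v))" for v
  have "0 \<le> b1" using q_nonneg q_le by (meson order_trans)
  have "0 \<le> b2" using p_nonneg p_le by (meson order_trans)
  have q_sq: "(\<Sum>r\<in>?L. (q r)\<^sup>2) \<le> b1"
  proof -
    have "(\<Sum>r\<in>?L. (q r)\<^sup>2) \<le> (\<Sum>r\<in>?L. b1 * q r)"
      using q_nonneg q_le by (intro sum_mono) (simp add: power2_eq_square mult_right_mono)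
    also have "\<dots> \<le> b1"
      using q_sum \<open>0 \<le> b1\<close> by (simp add: sum_distrib_left[symmetric] mult_left_le)
    finally show ?thesis .
  qed
  have "(\<Sum>v\<in>?L. p v * \<bar>F v\<bar>)\<^sup>2 = (\<Sum>v\<in>?L. sqrt (p v) * (sqrt (p v) * \<bar>F v\<bar>))\<^sup>2"
    using p_nonneg by (simp add: mult.assoc[symmetric])
  also have "\<dots> \<le> (\<Sum>v\<in>?L. (sqrt (p v))\<^sup>2) * (\<Sum>v\<in>?L. (sqrt (p v) * \<bar>F v\<bar>)\<^sup>2)"
    by (rule Cauchy_Schwarz_ineq_sum)
  also have "\<dots> = (\<Sum>v\<in>?L. p v * (F v)\<^sup>2)"
    using p_nonneg p_sum by (simp add: power_mult_distrib)
  also have "\<dots> \<le> (\<Sum>v\<in>?L. b2 * (F v)\<^sup>2)"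
    using p_le by (intro sum_mono mult_right_mono) auto
  also have "\<dots> = b2 * (2 ^ n * (\<Sum>r\<in>?L. (q r)\<^sup>2))"
    by (simp add: sum_distrib_left[symmetric] F_def parseval)
  also have "\<dots> \<le> b2 * (2 ^ n * b1)"
    using q_sq \<open>0 \<le> b2\<close> by (intro mult_left_mono) auto
  finally show ?thesis
    unfolding F_def by (intro real_le_rsqrt) (simp add: ac_simps)
qed

lemma inner_product_extractor_error:
  fixes n :: nat and \<zeta> \<Delta> \<alpha> :: real
  assumes "\<alpha> \<ge> 2 * \<Delta> + \<zeta>"
  shows "sqrt (2 powr (- (\<alpha> * n)) * 2 ^ n * 2 powr (- (n * (1 - \<zeta>)))) \<le> 2 powr (- \<Delta> * n)"
proof (rule real_le_lsqrt)
  have "2 powr (- (\<alpha> * n)) * 2 ^ n * 2 powr (- (n * (1 - \<zeta>)))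
      = 2 powr (- (\<alpha> * n) + n + - (n * (1 - \<zeta>)))"
    unfolding powr_add using powr_realpow[of 2 n] by simp
  also have "\<dots> \<le> 2 powr (2 * (- \<Delta> * n))"
  proof (rule powr_mono)
    have "(\<alpha> - 2 * \<Delta> - \<zeta>) * n \<ge> 0" using assms by simp
    then show "- (\<alpha> * n) + n + - (n * (1 - \<zeta>)) \<le> 2 * (- \<Delta> * n)"
      by (simp add: algebra_simps)
  qed simp
  also have "\<dots> = (2 powr (- \<Delta> * n))\<^sup>2"
    by (simp add: powr_realpow[symmetric] powr_powr power2_eq_square powr_add[symmetric])
  finally show "2 powr (- (\<alpha> * n)) * 2 ^ n * 2 powr (- (n * (1 - \<zeta>))) \<le> (2 powr (- \<Delta> * n))\<^sup>2" .
qed simp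

section \<open>The hybrid argument\<close>

text \<open>Weights \<open>p\<close> on matrices (lists of rows from \<open>R\<close>) are not normalised, so that they can be
restricted to the matrices with a given first row. \<open>proj_distance\<close> is twice the statistical
distance of the bits \<open>h(B\<^sub>i)\<close>, \<open>i \<in> T\<close>, from uniform, scaled by the total mass.\<close>

definition prefix_bias ::
    "('r list \<Rightarrow> real) \<Rightarrow> ('r \<Rightarrow> bool) \<Rightarrow> nat \<Rightarrow> nat \<Rightarrow> 'r set \<Rightarrow> real" where
  "prefix_bias p h i m R =
     (\<Sum>a\<in>lists_len R i. \<bar>\<Sum>B\<in>lists_len R m.
        (if take i B = a then p B * parity_sign (h (B ! i)) else 0)\<bar>)"

definition proj_distance ::
    "('r list \<Rightarrow> real) \<Rightarrow> ('r \<Rightarrow> bool) \<Rightarrow> nat set \<Rightarrow> nat \<Rightarrow> 'r set \<Rightarrow> real" where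
  "proj_distance p h T m R =
     (\<Sum>w\<in>lists_len UNIV (card T).
        \<bar>(\<Sum>B\<in>lists_len R m. (if nths (map h B) T = w then p B else 0))
           - (\<Sum>B\<in>lists_len R m. p B) / 2 ^ card T\<bar>)"

lemma prefix_bias_0:
  assumes "finite R"
  shows "prefix_bias p h 0 (Suc m) R
           = \<bar>\<Sum>r\<in>R. (\<Sum>B\<in>lists_len R m. p (r # B)) * parity_sign (h r)\<bar>"
  unfolding prefix_bias_def using assms by (simp add: sum_lists_len_Suc sum_distrib_right)

lemma sum_if_conj_eq:
  "(\<Sum>x\<in>X. \<Sum>y\<in>Y. if P x \<and> Q y then f x y else 0)
     = (\<Sum>x\<in>X. if P x then \<Sum>y\<in>Y. if Q y then f x y else 0 else 0)"
  by (intro sum.cong refl) auto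

lemma prefix_bias_Suc:
  assumes "finite R"
  shows "prefix_bias p h (Suc i) (Suc m) R = (\<Sum>r\<in>R. prefix_bias (\<lambda>B. p (r # B)) h i m R)"
  unfolding prefix_bias_def using assms
  by (simp add: sum_lists_len_Suc sum_if_conj_eq del: One_nat_def cong: if_cong)

lemma sum_prefix_bias_Suc:
  assumes "finite R"
  shows "(\<Sum>r\<in>R. \<Sum>i | Suc i \<in> T. prefix_bias (\<lambda>B. p (r # B)) h i m R)
           = (\<Sum>i\<in>T - {0}. prefix_bias p h i (Suc m) R)"
proof -
  have "T - {0} = Suc ` {i. Suc i \<in> T}"
    by (auto simp: image_iff) (metis not0_implies_Suc)
  then show ?thesis
    using assms by (simp add: prefix_bias_Suc sum.swap[of _ "{i. Suc i \<in> T}"] sum.reindex)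
qed

lemma proj_distance_Suc_le_notin:
  assumes R: "finite R" and "0 \<notin> T"
  shows "proj_distance p h T (Suc m) R
           \<le> (\<Sum>r\<in>R. proj_distance (\<lambda>B. p (r # B)) h {j. Suc j \<in> T} m R)"
proof -
  define T' where "T' = {j. Suc j \<in> T}"
  have "T = Suc ` T'"
    using \<open>0 \<notin> T\<close> unfolding T'_def by (auto simp: image_iff) (metis not0_implies_Suc)
  then have card_T: "card T = card T'"
    by (simp add: card_image)
  have nths: "nths (h r # map h B) T = nths (map h B) T'" for r B
    using \<open>0 \<notin> T\<close> unfolding T'_def by (simp add: nths_Cons)
  let ?t = "card T'"
  define G where "G r w = (\<Sum>B\<in>lists_len R m. (if nths (map h B) T' = w then p (r # B) else 0))"
    for r w
  define M where "M r = (\<Sum>B\<in>lists_len R m. p (r # B))" for r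
  have "proj_distance p h T (Suc m) R = (\<Sum>w\<in>lists_len UNIV ?t. \<bar>\<Sum>r\<in>R. G r w - M r / 2 ^ ?t\<bar>)"
    unfolding proj_distance_def card_T using R
    by (simp add: sum_lists_len_Suc nths G_def M_def sum_subtractf sum_divide_distrib)
  also have "\<dots> \<le> (\<Sum>w\<in>lists_len UNIV ?t. \<Sum>r\<in>R. \<bar>G r w - M r / 2 ^ ?t\<bar>)"
    by (intro sum_mono sum_abs)
  also have "\<dots> = (\<Sum>r\<in>R. proj_distance (\<lambda>B. p (r # B)) h T' m R)"
    unfolding proj_distance_def G_def M_def by (rule sum.swap)
  finally show ?thesis
    unfolding T'_def .
qed

lemma abs_sum_if_minus_le:
  fixes g f :: "'a \<Rightarrow> real"
  shows "\<bar>(\<Sum>r\<in>R. if P r then g r else 0) - c\<bar>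
           \<le> (\<Sum>r\<in>R. if P r then \<bar>g r - f r\<bar> else 0) + \<bar>(\<Sum>r\<in>R. if P r then f r else 0) - c\<bar>"
proof -
  have "(\<Sum>r\<in>R. if P r then g r else 0) - c
      = (\<Sum>r\<in>R. if P r then g r - f r else 0) + ((\<Sum>r\<in>R. if P r then f r else 0) - c)"
    by (simp add: sum.distrib[symmetric] if_distrib[of "\<lambda>z. z + _"] cong: if_cong)
  also have "\<bar>\<dots>\<bar> \<le> (\<Sum>r\<in>R. \<bar>if P r then g r - f r else 0\<bar>) + \<bar>(\<Sum>r\<in>R. if P r then f r else 0) - c\<bar>"
    by (intro order_trans[OF abs_triangle_ineq] add_right_mono sum_abs)
  finally show ?thesis
    by (simp add: if_distrib[of abs] cong: if_cong)
qed

lemma sum_UNIV_bool_if_eq: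
  fixes f :: "'a \<Rightarrow> 'b :: comm_monoid_add" and P :: "'a \<Rightarrow> bool"
  shows "(\<Sum>b\<in>UNIV. \<Sum>x\<in>X. if P x = b then f x else 0) = (\<Sum>x\<in>X. f x)"
  by (subst sum.swap) simp

text \<open>Compare the output with the hybrid in which the bit of row \<open>0\<close> is kept and the
remaining bits are made uniform: the first distance is controlled by the suffix weights, the
second is exactly the bias of row \<open>0\<close>.\<close>

lemma proj_distance_Suc_le_in:
  assumes R: "finite R" and "0 \<in> T" and "finite T"
  shows "proj_distance p h T (Suc m) R
           \<le> (\<Sum>r\<in>R. proj_distance (\<lambda>B. p (r # B)) h {j. Suc j \<in> T} m R)
              + prefix_bias p h 0 (Suc m) R"
proof -
  define T' where "T' = {j. Suc j \<in> T}"
  have T: "T = insert 0 (Suc ` T')"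
    using \<open>0 \<in> T\<close> unfolding T'_def by (auto simp: image_iff) (metis not0_implies_Suc)
  have "finite T'"
    using \<open>finite T\<close> unfolding T'_def by (simp add: finite_vimage_Suc_iff[unfolded vimage_def])
  have card_T: "card T = Suc (card T')"
    unfolding T using \<open>finite T'\<close> by (simp add: card_image image_iff)
  have nths: "nths (h r # map h B) T = h r # nths (map h B) T'" for r B
    using \<open>0 \<in> T\<close> unfolding T'_def by (simp add: nths_Cons)
  let ?t = "card T'"
  let ?W = "lists_len (UNIV :: bool set) ?t"
  define G where "G r w = (\<Sum>B\<in>lists_len R m. (if nths (map h B) T' = w then p (r # B) else 0))"
    for r w
  define M where "M r = (\<Sum>B\<in>lists_len R m. p (r # B))" for r
  define Mb where "Mb b = (\<Sum>r\<in>R. if h r = b then M r else 0)" for b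
  define c where "c = (Mb True + Mb False) / 2 ^ Suc ?t"
  have mass: "(\<Sum>r\<in>R. M r) = Mb True + Mb False"
    unfolding Mb_def sum.distrib[symmetric] by (intro sum.cong) auto
  have "proj_distance p h T (Suc m) R
      = (\<Sum>b\<in>UNIV. \<Sum>w\<in>?W. \<bar>(\<Sum>r\<in>R. if h r = b then G r w else 0) - c\<bar>)"
    unfolding proj_distance_def card_T c_def using R
    by (simp add: sum_lists_len_Suc[of UNIV] sum_lists_len_Suc[of R] nths G_def M_def
        mass[unfolded M_def] sum_if_conj_eq cong: if_cong)
  also have "\<dots> \<le> (\<Sum>b\<in>UNIV. \<Sum>w\<in>?W.
      (\<Sum>r\<in>R. if h r = b then \<bar>G r w - M r / 2 ^ ?t\<bar> else 0) + \<bar>Mb b / 2 ^ ?t - c\<bar>)"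
  proof -
    have "Mb b / 2 ^ ?t = (\<Sum>r\<in>R. if h r = b then M r / 2 ^ ?t else 0)" for b
      unfolding Mb_def sum_divide_distrib by (intro sum.cong) auto
    then show ?thesis by (simp only:) (intro sum_mono abs_sum_if_minus_le)
  qed
  also have "\<dots> = (\<Sum>r\<in>R. proj_distance (\<lambda>B. p (r # B)) h T' m R)
                  + (\<Sum>b\<in>UNIV. 2 ^ ?t * \<bar>Mb b / 2 ^ ?t - c\<bar>)"
  proof -
    have "(\<Sum>w\<in>?W. \<Sum>r\<in>R. if h r = b then \<bar>G r w - M r / 2 ^ ?t\<bar> else 0)
        = (\<Sum>r\<in>R. if h r = b then proj_distance (\<lambda>B. p (r # B)) h T' m R else 0)" for b
      unfolding proj_distance_def G_def M_def by (subst sum.swap) (intro sum.cong refl; simp)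
    then show ?thesis
      by (simp add: sum.distrib card_lists_len_bool sum_UNIV_bool_if_eq)
  qed
  also have "(\<Sum>b\<in>UNIV. 2 ^ ?t * \<bar>Mb b / 2 ^ ?t - c\<bar>) = \<bar>Mb False - Mb True\<bar>"
    unfolding c_def by (simp add: UNIV_bool abs_if field_simps)
  also have "Mb False - Mb True = (\<Sum>r\<in>R. M r * parity_sign (h r))"
    unfolding Mb_def sum_subtractf[symmetric] by (intro sum.cong) (auto simp: parity_sign_def)
  finally show ?thesis
    unfolding prefix_bias_0[OF R] M_def T'_def .
qed

lemma proj_distance_le_sum_prefix_bias:
  assumes "finite R" "T \<subseteq> {..<m}"
  shows "proj_distance p h T m R \<le> (\<Sum>i\<in>T. prefix_bias p h i m R)"
  using assms(2)
proof (induction m arbitrary: p T)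
  case 0
  then show ?case by (simp add: proj_distance_def)
next
  case (Suc m)
  let ?T' = "{j. Suc j \<in> T}"
  have "finite T"
    using Suc.prems finite_subset by blast
  have "(\<Sum>r\<in>R. proj_distance (\<lambda>B. p (r # B)) h ?T' m R)
      \<le> (\<Sum>r\<in>R. \<Sum>i\<in>?T'. prefix_bias (\<lambda>B. p (r # B)) h i m R)"
    using Suc by (intro sum_mono Suc.IH) auto
  also have "\<dots> = (\<Sum>i\<in>T - {0}. prefix_bias p h i (Suc m) R)"
    using assms(1) by (rule sum_prefix_bias_Suc)
  finally have suffix: "(\<Sum>r\<in>R. proj_distance (\<lambda>B. p (r # B)) h ?T' m R)
      \<le> (\<Sum>i\<in>T - {0}. prefix_bias p h i (Suc m) R)" .
  show ?case
  proof (cases "0 \<in> T")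
    case True
    then show ?thesis
      using proj_distance_Suc_le_in[OF assms(1) True \<open>finite T\<close>, of p h m] suffix
        sum.remove[OF \<open>finite T\<close> True, of "\<lambda>i. prefix_bias p h i (Suc m) R"] by linarith
  next
    case False
    then show ?thesis
      using proj_distance_Suc_le_notin[OF assms(1) False, of p h m] suffix by simp
  qed
qed

lemma pmf_le_of_min_entropy:
  assumes "min_entropy X \<ge> k"
  shows "pmf X y \<le> 2 powr (-k)"
proof -
  let ?s = "Sup (range (pmf X))"
  have "bdd_above (range (pmf X))"
    by (rule bdd_aboveI[of _ 1]) (auto simp: pmf_le_1)
  then have le_s: "pmf X z \<le> ?s" for z
    by (intro cSup_upper) auto
  obtain y0 where "y0 \<in> set_pmf X"
    using set_pmf_not_empty by fast
  then have "0 < ?s"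
    using le_s[of y0] pmf_positive[of y0 X] by linarith
  moreover have "log 2 ?s \<le> -k"
    using assms unfolding min_entropy_def by simp
  ultimately have "?s \<le> 2 powr (-k)"
    using powr_mono[of "log 2 ?s" "-k" 2] by simp
  then show ?thesis
    using le_s[of y] by simp
qed

lemma pmf_map_pmf_eq_sum:
  assumes "finite F" "set_pmf M \<subseteq> F"
  shows "pmf (map_pmf f M) w = (\<Sum>z\<in>F. if f z = w then pmf M z else 0)"
proof -
  have "pmf (map_pmf f M) w = measure M (f -` {w} \<inter> set_pmf M)"
    by (simp add: pmf_map measure_Int_set_pmf)
  also have "f -` {w} \<inter> set_pmf M = (F \<inter> f -` {w}) \<inter> set_pmf M"
    using assms(2) by auto
  also have "measure M \<dots> = measure M (F \<inter> f -` {w})"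
    by (rule measure_Int_set_pmf)
  also have "\<dots> = (\<Sum>z\<in>F. if f z = w then pmf M z else 0)"
    using assms(1) by (simp add: measure_measure_pmf_finite sum.inter_filter[symmetric] Int_def)
  finally show ?thesis .
qed

lemma sum_pmf_map_pmf:
  assumes "finite F" "set_pmf M \<subseteq> F" "finite V" "f ` set_pmf M \<subseteq> V"
  shows "(\<Sum>z\<in>F. pmf M z * g (f z)) = (\<Sum>r\<in>V. pmf (map_pmf f M) r * (g r :: real))"
proof -
  have "(\<Sum>z\<in>F. pmf M z * g (f z)) = measure_pmf.expectation M (\<lambda>z. g (f z))"
    using assms(1,2) by (subst integral_measure_pmf_real[of F]) (auto simp: ac_simps)
  also have "\<dots> = measure_pmf.expectation (map_pmf f M) g"
    by simp
  also have "\<dots> = (\<Sum>r\<in>V. pmf (map_pmf f M) r * g r)"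
    using assms(3,4) by (subst integral_measure_pmf_real[of V]) (auto simp: ac_simps)
  finally show ?thesis .
qed

lemma sum_restrict_eq_measure_cond_pmf:
  assumes "finite F" "set_pmf M \<subseteq> F" "set_pmf M \<inter> E \<noteq> {}"
  shows "(\<Sum>z\<in>F. if z \<in> E then pmf M z * g z else 0)
           = measure M E * (\<Sum>z\<in>F. pmf (cond_pmf M E) z * (g z :: real))"
proof -
  have "measure M E \<noteq> 0"
    using assms(3) by (simp add: measure_pmf_zero_iff)
  then show ?thesis
    unfolding sum_distrib_left pmf_cond[OF assms(3)] by (intro sum.cong) auto
qed

lemma stat_dist_pmf_of_set:
  assumes "finite W" "W \<noteq> {}" "set_pmf P \<subseteq> W"
  shows "stat_dist P (pmf_of_set W) = (\<Sum>w\<in>W. \<bar>pmf P w - 1 / card W\<bar>) / 2"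
proof -
  have "set_pmf P \<union> set_pmf (pmf_of_set W) = W"
    using assms by auto
  then show ?thesis
    unfolding stat_dist_def using assms(1,2) by simp
qed

section \<open>The bias of a high-entropy row against an independent source\<close>

lemma sum_prefix_eq_measure_cond_row:
  fixes A :: "'r list pmf" and g :: "'r \<Rightarrow> real"
  assumes "finite V" "set_pmf A \<subseteq> lists_len V m" "i < m"
    and "set_pmf A \<inter> {B. take i B = a} \<noteq> {}"
  shows "(\<Sum>B\<in>lists_len V m. if take i B = a then pmf A B * g (B ! i) else 0)
           = measure A {B. take i B = a}
             * (\<Sum>r\<in>V. pmf (map_pmf (\<lambda>B. B ! i) (cond_pmf A {B. take i B = a})) r * g r)"
proof -
  let ?M = "lists_len V m"
  have "finite ?M"
    using assms(1) by (simp add: finite_lists_len)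
  have "B ! i \<in> V" if "B \<in> ?M" for B
    using that \<open>i < m\<close> nth_mem[of i B] unfolding lists_len_def by auto
  moreover have "set_pmf (cond_pmf A {B. take i B = a}) \<subseteq> ?M"
    using assms(2,4) by auto
  ultimately show ?thesis
    using sum_restrict_eq_measure_cond_pmf[OF \<open>finite ?M\<close> assms(2,4), of "\<lambda>B. g (B ! i)"]
      \<open>finite ?M\<close> assms(1) by (subst (asm) sum_pmf_map_pmf[where V = V]) auto
qed

lemma expected_abs_prefix_sum_le:
  fixes A :: "bool list list pmf" and x :: "bool list pmf" and n :: nat
  defines "V \<equiv> lists_len (UNIV :: bool set) n"
  assumes suppA: "set_pmf A \<subseteq> lists_len V m" and suppx: "set_pmf x \<subseteq> V" and "i < m"
    and row_entropy: "\<forall>A0\<in>set_pmf A.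
          min_entropy (map_pmf (\<lambda>B. B ! i) (cond_pmf A {B. take i B = take i A0})) \<ge> k"
    and x_le: "\<And>v. pmf x v \<le> b"
    and error: "sqrt (b * 2 ^ n * 2 powr (-k)) \<le> \<epsilon>"
  shows "(\<Sum>v\<in>V. pmf x v * \<bar>\<Sum>B\<in>lists_len V m.
            if take i B = a then pmf A B * parity_sign (dot2 (B ! i) v) else 0\<bar>)
           \<le> measure A {B. take i B = a} * \<epsilon>"
proof (cases "set_pmf A \<inter> {B. take i B = a} = {}")
  case True
  have "0 \<le> b"
    using x_le[of undefined] pmf_nonneg[of x undefined] by linarith
  then have "0 \<le> sqrt (b * 2 ^ n * 2 powr (-k))"
    by simp
  then have "0 \<le> \<epsilon>"
    using error by linarith
  moreover have "pmf A B = 0" if "take i B = a" for B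
    using True that by (auto simp: set_pmf_iff)
  ultimately show ?thesis
    by (simp cong: if_cong)
next
  case False
  let ?E = "{B. take i B = a}"
  define q where "q = pmf (map_pmf (\<lambda>B. B ! i) (cond_pmf A ?E))"
  have "finite V"
    unfolding V_def by (simp add: finite_lists_len)
  obtain A0 where A0: "A0 \<in> set_pmf A" "?E = {B. take i B = take i A0}"
    using False by auto
  have "(\<Sum>v\<in>V. pmf x v * \<bar>\<Sum>r\<in>V. q r * parity_sign (dot2 r v)\<bar>) \<le> sqrt (b * 2 ^ n * 2 powr (-k))"
    unfolding V_def
  proof (rule inner_product_extractor)
    show "(\<Sum>r\<in>lists_len UNIV n. q r) \<le> 1"
      using \<open>finite V\<close> unfolding q_def V_def by (simp add: measure_measure_pmf_finite[symmetric])
    show "q r \<le> 2 powr (-k)" for r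
      unfolding q_def A0(2) using row_entropy A0(1) by (intro pmf_le_of_min_entropy) blast
    show "(\<Sum>v\<in>lists_len UNIV n. pmf x v) = 1"
      using \<open>finite V\<close> suppx unfolding V_def by (rule sum_pmf_eq_1)
  qed (auto simp: q_def x_le)
  then have extractor: "(\<Sum>v\<in>V. pmf x v * \<bar>\<Sum>r\<in>V. q r * parity_sign (dot2 r v)\<bar>) \<le> \<epsilon>"
    using error by linarith
  have "(\<Sum>B\<in>lists_len V m. if take i B = a then pmf A B * parity_sign (dot2 (B ! i) v) else 0)
      = measure A ?E * (\<Sum>r\<in>V. q r * parity_sign (dot2 r v))" for v
    unfolding q_def by (rule sum_prefix_eq_measure_cond_row[OF \<open>finite V\<close> suppA \<open>i < m\<close> False])
  then have "(\<Sum>v\<in>V. pmf x v * \<bar>\<Sum>B\<in>lists_len V m.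
        if take i B = a then pmf A B * parity_sign (dot2 (B ! i) v) else 0\<bar>)
      = (\<Sum>v\<in>V. measure A ?E * (pmf x v * \<bar>\<Sum>r\<in>V. q r * parity_sign (dot2 r v)\<bar>))"
    by (intro sum.cong refl) (simp add: abs_mult)
  also have "\<dots> = measure A ?E * (\<Sum>v\<in>V. pmf x v * \<bar>\<Sum>r\<in>V. q r * parity_sign (dot2 r v)\<bar>)"
    by (rule sum_distrib_left[symmetric])
  also have "\<dots> \<le> measure A ?E * \<epsilon>"
    using extractor by (intro mult_left_mono) auto
  finally show ?thesis .
qed

lemma expected_prefix_bias_le:
  fixes A :: "bool list list pmf" and x :: "bool list pmf" and n :: nat
  defines "V \<equiv> lists_len (UNIV :: bool set) n"
  assumes suppA: "set_pmf A \<subseteq> lists_len V m" and suppx: "set_pmf x \<subseteq> V" and "i < m"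
    and row_entropy: "\<forall>A0\<in>set_pmf A.
          min_entropy (map_pmf (\<lambda>B. B ! i) (cond_pmf A {B. take i B = take i A0})) \<ge> k"
    and x_le: "\<And>v. pmf x v \<le> b"
    and error: "sqrt (b * 2 ^ n * 2 powr (-k)) \<le> \<epsilon>"
  shows "(\<Sum>v\<in>V. pmf x v * prefix_bias (pmf A) (\<lambda>r. dot2 r v) i m V) \<le> \<epsilon>"
proof -
  have "finite V"
    unfolding V_def by (simp add: finite_lists_len)
  have "set_pmf (map_pmf (take i) A) \<subseteq> lists_len V i"
    using suppA \<open>i < m\<close> unfolding lists_len_def by (auto dest: in_set_takeD)
  then have "(\<Sum>a\<in>lists_len V i. pmf (map_pmf (take i) A) a) = 1"
    using \<open>finite V\<close> by (intro sum_pmf_eq_1) (simp_all add: finite_lists_len)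
  then have prefix_mass: "(\<Sum>a\<in>lists_len V i. measure A {B. take i B = a}) = 1"
    unfolding pmf_map vimage_def by simp
  have "(\<Sum>v\<in>V. pmf x v * prefix_bias (pmf A) (\<lambda>r. dot2 r v) i m V)
      = (\<Sum>a\<in>lists_len V i. \<Sum>v\<in>V. pmf x v * \<bar>\<Sum>B\<in>lists_len V m.
            if take i B = a then pmf A B * parity_sign (dot2 (B ! i) v) else 0\<bar>)"
    unfolding prefix_bias_def sum_distrib_left by (rule sum.swap)
  also have "\<dots> \<le> (\<Sum>a\<in>lists_len V i. measure A {B. take i B = a} * \<epsilon>)"
    using expected_abs_prefix_sum_le[OF suppA[unfolded V_def] suppx[unfolded V_def] \<open>i < m\<close>
        row_entropy x_le error]
    unfolding V_def by (intro sum_mono) blast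
  also have "\<dots> = \<epsilon>"
    using prefix_mass by (simp add: sum_distrib_right[symmetric])
  finally show ?thesis .
qed

section \<open>The distance of \<open>(A'x)\<^sub>T\<close> from uniform\<close>

lemma pmf_proj_mat_vec2:
  fixes A :: "bool list list pmf" and x :: "bool list pmf"
  assumes "finite V" "set_pmf A \<subseteq> lists_len V m" "set_pmf x \<subseteq> V"
  shows "pmf (map_pmf (\<lambda>(B, v). nths (mat_vec2 B v) T) (pair_pmf A x)) w
           = (\<Sum>v\<in>V. pmf x v * (\<Sum>B\<in>lists_len V m.
                if nths (map (\<lambda>r. dot2 r v) B) T = w then pmf A B else 0))"
proof -
  let ?M = "lists_len V m"
  have "pmf (map_pmf (\<lambda>(B, v). nths (mat_vec2 B v) T) (pair_pmf A x)) w
      = (\<Sum>z\<in>?M \<times> V. if (\<lambda>(B, v). nths (mat_vec2 B v) T) z = w then pmf (pair_pmf A x) z else 0)"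
    using assms by (intro pmf_map_pmf_eq_sum) (auto simp: finite_lists_len)
  also have "\<dots> = (\<Sum>B\<in>?M. \<Sum>v\<in>V.
      if nths (map (\<lambda>r. dot2 r v) B) T = w then pmf A B * pmf x v else 0)"
  proof -
    have "pmf (pair_pmf A x) z = pmf A (fst z) * pmf x (snd z)" for z
      by (cases z) (simp add: pmf_pair)
    then show ?thesis
      by (simp add: sum.cartesian_product mat_vec2_def case_prod_beta cong: if_cong)
  qed
  also have "\<dots> = (\<Sum>v\<in>V. pmf x v * (\<Sum>B\<in>?M.
      if nths (map (\<lambda>r. dot2 r v) B) T = w then pmf A B else 0))"
    unfolding sum_distrib_left by (subst sum.swap) (intro sum.cong refl; simp)
  finally show ?thesis .
qed

lemma set_pmf_proj_mat_vec2:
  assumes "set_pmf A \<subseteq> lists_len V m" "T \<subseteq> {..<m}"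
  shows "set_pmf (map_pmf (\<lambda>(B, v). nths (mat_vec2 B v) T) (pair_pmf A x))
           \<subseteq> lists_len UNIV (card T)"
proof
  fix w assume "w \<in> set_pmf (map_pmf (\<lambda>(B, v). nths (mat_vec2 B v) T) (pair_pmf A x))"
  then obtain B v where "B \<in> set_pmf A" "w = nths (mat_vec2 B v) T"
    by auto
  moreover have "{i. i < m \<and> i \<in> T} = T"
    using assms(2) by auto
  ultimately show "w \<in> lists_len UNIV (card T)"
    using assms(1) by (auto simp: lists_len_def length_nths mat_vec2_def)
qed

lemma stat_dist_proj_le_sum_prefix_bias:
  fixes A :: "bool list list pmf" and x :: "bool list pmf" and n :: nat
  defines "V \<equiv> lists_len (UNIV :: bool set) n"
  assumes suppA: "set_pmf A \<subseteq> lists_len V m" and suppx: "set_pmf x \<subseteq> V" and "T \<subseteq> {..<m}"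
  shows "stat_dist (map_pmf (\<lambda>(B, v). nths (mat_vec2 B v) T) (pair_pmf A x))
                   (pmf_of_set {w. length w = card T})
           \<le> (\<Sum>i\<in>T. \<Sum>v\<in>V. pmf x v * prefix_bias (pmf A) (\<lambda>r. dot2 r v) i m V) / 2"
proof -
  let ?t = "card T"
  let ?M = "lists_len V m"
  let ?W = "lists_len (UNIV :: bool set) ?t"
  define P where "P = map_pmf (\<lambda>(B, v). nths (mat_vec2 B v) T) (pair_pmf A x)"
  define G where "G v w = (\<Sum>B\<in>?M. if nths (map (\<lambda>r. dot2 r v) B) T = w then pmf A B else 0)"
    for v w
  have "finite V" unfolding V_def by (simp add: finite_lists_len)
  have "set_pmf P \<subseteq> ?W"
    unfolding P_def using suppA \<open>T \<subseteq> {..<m}\<close> by (rule set_pmf_proj_mat_vec2)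
  moreover have "replicate ?t True \<in> ?W"
    by (simp add: lists_len_def)
  ultimately have "stat_dist P (pmf_of_set ?W) = (\<Sum>w\<in>?W. \<bar>pmf P w - 1 / 2 ^ ?t\<bar>) / 2"
    by (subst stat_dist_pmf_of_set) (auto simp: finite_lists_len card_lists_len_bool)
  also have "(\<Sum>w\<in>?W. \<bar>pmf P w - 1 / 2 ^ ?t\<bar>) = (\<Sum>w\<in>?W. \<bar>\<Sum>v\<in>V. pmf x v * (G v w - 1 / 2 ^ ?t)\<bar>)"
  proof -
    have "(\<Sum>v\<in>V. pmf x v) = 1"
      using \<open>finite V\<close> suppx by (rule sum_pmf_eq_1)
    then show ?thesis
      unfolding P_def pmf_proj_mat_vec2[OF \<open>finite V\<close> suppA suppx] G_def
      by (simp add: right_diff_distrib sum_subtractf sum_divide_distrib[symmetric])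
  qed
  also have "\<dots> \<le> (\<Sum>w\<in>?W. \<Sum>v\<in>V. pmf x v * \<bar>G v w - 1 / 2 ^ ?t\<bar>)"
    by (intro sum_mono order_trans[OF sum_abs]) (simp add: abs_mult)
  also have "\<dots> = (\<Sum>v\<in>V. pmf x v * proj_distance (pmf A) (\<lambda>r. dot2 r v) T m V)"
  proof -
    have "(\<Sum>B\<in>?M. pmf A B) = 1"
      using \<open>finite V\<close> suppA by (intro sum_pmf_eq_1) (simp_all add: finite_lists_len)
    then show ?thesis
      unfolding proj_distance_def G_def sum_distrib_left by (subst sum.swap) simp
  qed
  also have "\<dots> \<le> (\<Sum>v\<in>V. pmf x v * (\<Sum>i\<in>T. prefix_bias (pmf A) (\<lambda>r. dot2 r v) i m V))"
    using \<open>finite V\<close> \<open>T \<subseteq> {..<m}\<close>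
    by (intro sum_mono mult_left_mono proj_distance_le_sum_prefix_bias) auto
  also have "\<dots> = (\<Sum>i\<in>T. \<Sum>v\<in>V. pmf x v * prefix_bias (pmf A) (\<lambda>r. dot2 r v) i m V)"
    unfolding sum_distrib_left by (rule sum.swap)
  finally show ?thesis
    unfolding P_def lists_len_UNIV by simp
qed

lemma card_lessThan_Diff_ge:
  assumes "S \<subseteq> {..<m}" "real (card S) \<le> \<eta> * real m"
  shows "real (card ({..<m} - S)) \<ge> (1 - \<eta>) * real m"
proof -
  have "card ({..<m} - S) = m - card S" "card S \<le> m"
    using assms(1) finite_subset[OF assms(1)] card_mono[OF finite_lessThan assms(1)]
    by (simp_all add: card_Diff_subset)
  then show ?thesis
    using assms(2) by (simp add: of_nat_diff left_diff_distrib)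
qed

theorem lemmaG9:
  fixes m n :: nat and \<eta> \<zeta> \<Delta> \<alpha> :: real
    and A :: "bool list list pmf" and x :: "bool list pmf"
  assumes "0 < m" "m \<le> n"
    and "0 \<le> \<eta>" "\<eta> \<le> 1"
    and "\<Delta> > 0" "\<alpha> \<ge> 2 * \<Delta> + \<zeta>"
    and "\<forall>B \<in> set_pmf A. is_matrix m n B"
    and "block_source \<eta> (real n * (1 - \<zeta>)) m A"
    and "\<forall>v \<in> set_pmf x. length v = n"
    and "min_entropy x \<ge> \<alpha> * real n"
  shows "\<exists>T \<subseteq> {..<m}. real (card T) \<ge> (1 - \<eta>) * real m \<and>
           stat_dist (map_pmf (\<lambda>(B, v). nths (mat_vec2 B v) T) (pair_pmf A x))
                     (pmf_of_set {w. length w = card T})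
             \<le> real (card T) * 2 powr (- \<Delta> * real n)"
proof -
  let ?V = "lists_len (UNIV :: bool set) n"
  let ?\<epsilon> = "2 powr (- \<Delta> * real n)"
  obtain S where "S \<subseteq> {..<m}" and card_S: "real (card S) \<le> \<eta> * real m"
    and row_entropy: "\<And>A0 i. A0 \<in> set_pmf A \<Longrightarrow> i < m \<Longrightarrow> i \<notin> S \<Longrightarrow>
          min_entropy (map_pmf (\<lambda>B. B ! i) (cond_pmf A {B. take i B = take i A0})) \<ge> real n * (1 - \<zeta>)"
    using assms(8) unfolding block_source_def by blast
  define T where "T = {..<m} - S"
  then have "T \<subseteq> {..<m}"
    by blast
  have suppA: "set_pmf A \<subseteq> lists_len ?V m" and suppx: "set_pmf x \<subseteq> ?V"
    using assms(7,9) unfolding is_matrix_def lists_len_def by auto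
  have card_T: "real (card T) \<ge> (1 - \<eta>) * real m"
    unfolding T_def using \<open>S \<subseteq> {..<m}\<close> card_S by (rule card_lessThan_Diff_ge)
  have "(\<Sum>v\<in>?V. pmf x v * prefix_bias (pmf A) (\<lambda>r. dot2 r v) i m ?V) \<le> ?\<epsilon>" if "i \<in> T" for i
    using that suppA suppx row_entropy pmf_le_of_min_entropy[OF assms(10)]
      inner_product_extractor_error[OF assms(6)] unfolding T_def
    by (intro expected_prefix_bias_le[where k = "real n * (1 - \<zeta>)"]) auto
  then have "(\<Sum>i\<in>T. \<Sum>v\<in>?V. pmf x v * prefix_bias (pmf A) (\<lambda>r. dot2 r v) i m ?V)
      \<le> real (card T) * ?\<epsilon>"
    by (rule sum_bounded_above)
  moreover have "0 \<le> real (card T) * ?\<epsilon>"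
    by simp
  ultimately have "stat_dist (map_pmf (\<lambda>(B, v). nths (mat_vec2 B v) T) (pair_pmf A x))
                   (pmf_of_set {w. length w = card T}) \<le> real (card T) * ?\<epsilon>"
    using stat_dist_proj_le_sum_prefix_bias[OF suppA suppx \<open>T \<subseteq> {..<m}\<close>] by linarith
  then show ?thesis
    using card_T \<open>T \<subseteq> {..<m}\<close> by blast
qed

end
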